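(* Let $\Pi$ be the set of graphs $G$ satisfying $\sum_{H:|V(H)|=4} w_H\cdot p(H,G)\le \frac{5}{16}$, where $w_{K_4}=1$, $w_{\bar{K_4}}=\frac12$, $w_{D_4}=\frac{5}{12}$, $w_{\bar{D_4}}=\frac{5}{12}$, $w_{P_3}=\frac13$, $w_{\bar{P_3}}=\frac16$, $w_{C_4}=\frac12$, $w_{\bar{C_4}}=\frac13$, $w_{K_{1,3}}=\frac14$, $w_{\bar{K_{1,3}}}=\frac14$, $w_{P_4}=\frac14$. Then for every $n\ge1$, every $n$-vertex graph $G\in\Pi$ is $\delta$-quasirandom with $\delta=O(n^{-1/24})$ (the implied constant being absolute).
   Context: $K_4$ is the complete graph on 4 vertices, $D_4$ is $K_4$ minus an edge, $P_3$ is the 4-vertex graph consisting of a path on 3 vertices plus an isolated vertex, $C_4$ the 4-cycle, $P_4$ the path on 4 vertices, $K_{1,3}$ the star on 4 vertices, and $\bar H$ the complement of $H$. $p(H,G)$ is the fraction of induced subgraphs of $G$ on $|V(H)|$ vertices isomorphic to $H$. An $n$-vertex graph $G$ is $\delta$-quasirandom (with density $1/2$) if for every pair of disjoint sets $U,V\subseteq V(G)$ with $|U|,|V|\ge\delta n$, the number of edges between $U$ and $V$ satisfies $e(U,V)\in[(\frac12-\delta)|U||V|,(\frac12+\delta)|U||V|]$. *)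

theory Defs
  imports Complex_Main
begin

text \<open>Graphs on n vertices are represented with vertex set {0..<n} (every n-vertex
graph is isomorphic to one of these) and a symmetric irreflexive edge relation.\<close>

definition simple_graph :: "(nat \<Rightarrow> nat \<Rightarrow> bool) \<Rightarrow> bool" where
  "simple_graph E \<longleftrightarrow> (\<forall>x y. E x y = E y x) \<and> (\<forall>x. \<not> E x x)"

definition gcompl :: "(nat \<Rightarrow> nat \<Rightarrow> bool) \<Rightarrow> nat \<Rightarrow> nat \<Rightarrow> bool" where
  "gcompl H i j \<longleftrightarrow> i \<noteq> j \<and> \<not> H i j"

definition edges_graph :: "(nat \<times> nat) set \<Rightarrow> nat \<Rightarrow> nat \<Rightarrow> bool" where
  "edges_graph S i j \<longleftrightarrow> (i, j) \<in> S \<or> (j, i) \<in> S"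

definition K4 :: "nat \<Rightarrow> nat \<Rightarrow> bool" where
  "K4 = edges_graph {(0,1),(0,2),(0,3),(1,2),(1,3),(2,3)}"
definition D4 :: "nat \<Rightarrow> nat \<Rightarrow> bool" where
  "D4 = edges_graph {(0,2),(0,3),(1,2),(1,3),(2,3)}"
definition P3 :: "nat \<Rightarrow> nat \<Rightarrow> bool" where
  "P3 = edges_graph {(0,1),(1,2)}"
definition C4 :: "nat \<Rightarrow> nat \<Rightarrow> bool" where
  "C4 = edges_graph {(0,1),(1,2),(2,3),(3,0)}"
definition P4 :: "nat \<Rightarrow> nat \<Rightarrow> bool" where
  "P4 = edges_graph {(0,1),(1,2),(2,3)}"
definition K13 :: "nat \<Rightarrow> nat \<Rightarrow> bool" where
  "K13 = edges_graph {(0,1),(0,2),(0,3)}"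

definition induced_copy :: "(nat \<Rightarrow> nat \<Rightarrow> bool) \<Rightarrow> nat \<Rightarrow> (nat \<Rightarrow> nat \<Rightarrow> bool) \<Rightarrow> nat set \<Rightarrow> bool" where
  "induced_copy H k E S \<longleftrightarrow>
     (\<exists>f. bij_betw f S {0..<k} \<and> (\<forall>x\<in>S. \<forall>y\<in>S. E x y \<longleftrightarrow> H (f x) (f y)))"

definition p4 :: "(nat \<Rightarrow> nat \<Rightarrow> bool) \<Rightarrow> nat \<Rightarrow> (nat \<Rightarrow> nat \<Rightarrow> bool) \<Rightarrow> real" where
  "p4 H n E = real (card {S. S \<subseteq> {0..<n} \<and> card S = 4 \<and> induced_copy H 4 E S})
              / real (n choose 4)"

definition weighted_sum :: "nat \<Rightarrow> (nat \<Rightarrow> nat \<Rightarrow> bool) \<Rightarrow> real" where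
  "weighted_sum n E =
      1 * p4 K4 n E + 1/2 * p4 (gcompl K4) n E
    + 5/12 * p4 D4 n E + 5/12 * p4 (gcompl D4) n E
    + 1/3 * p4 P3 n E + 1/6 * p4 (gcompl P3) n E
    + 1/2 * p4 C4 n E + 1/3 * p4 (gcompl C4) n E
    + 1/4 * p4 K13 n E + 1/4 * p4 (gcompl K13) n E
    + 1/4 * p4 P4 n E"

definition in_Pi :: "nat \<Rightarrow> (nat \<Rightarrow> nat \<Rightarrow> bool) \<Rightarrow> bool" where
  "in_Pi n E \<longleftrightarrow> weighted_sum n E \<le> 5/16"

definition e_between :: "(nat \<Rightarrow> nat \<Rightarrow> bool) \<Rightarrow> nat set \<Rightarrow> nat set \<Rightarrow> nat" where
  "e_between E U W = card {(u, w). u \<in> U \<and> w \<in> W \<and> E u w}"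

definition quasirandom :: "real \<Rightarrow> nat \<Rightarrow> (nat \<Rightarrow> nat \<Rightarrow> bool) \<Rightarrow> bool" where
  "quasirandom \<delta> n E \<longleftrightarrow>
     (\<forall>U W. U \<subseteq> {0..<n} \<and> W \<subseteq> {0..<n} \<and> U \<inter> W = {}
        \<and> real (card U) \<ge> \<delta> * real n \<and> real (card W) \<ge> \<delta> * real n \<longrightarrow>
        (1/2 - \<delta>) * real (card U) * real (card W) \<le> real (e_between E U W) \<and>
        real (e_between E U W) \<le> (1/2 + \<delta>) * real (card U) * real (card W))"

end

theory Submission
  imports Defs "HOL-Analysis.Convex"
begin

text \<open>
  Let A be the signed adjacency matrix (+1 on edges, -1 on non-edges, 0 on the diagonal).
  A fixed polynomial Q of degree at most four in the entries of A, summed over the 24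
  orderings of a 4-set S, is at most the pattern weight of S minus 5/16; this is checked on
  all 64 labelled graphs on four vertices. Summing over all 4-sets, the hypothesis makes the
  sum of Q over all injective 4-tuples nonpositive, so the sum over all 4-tuples is O(n^3).
  In that sum the terms of Q spanning two or three edges add up to something nonnegative
  (a square, and paths of length two and three balanced by AM-GM), which leaves
  tr A^4 = O(n^3). Finally, Cauchy-Schwarz applied twice gives
  (sum of A over U x W)^4 <= |U|^2 |W|^2 tr A^4, so sets of size at least delta n with
  delta of order n^(-1/8) have edge density 1/2 +- delta between them.
\<close>

section \<open>Ordered four-tuples\<close>

definition orderings :: "'a set \<Rightarrow> ('a \<times> 'a \<times> 'a \<times> 'a) set" where
  "orderings S = {(a, b, c, d). distinct [a, b, c, d] \<and> {a, b, c, d} = S}"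

definition distinct_tuples :: "'a set \<Rightarrow> ('a \<times> 'a \<times> 'a \<times> 'a) set" where
  "distinct_tuples V = {(a, b, c, d). a \<in> V \<and> b \<in> V \<and> c \<in> V \<and> d \<in> V \<and> distinct [a, b, c, d]}"

lemma sum_tuples_nested:
  "(\<Sum>x\<in>V \<times> V \<times> V \<times> V. f x) = (\<Sum>a\<in>V. \<Sum>b\<in>V. \<Sum>c\<in>V. \<Sum>d\<in>V. f (a, b, c, d))"
  by (simp add: sum.cartesian_product)

lemma card_4_iff: "card S = 4 \<longleftrightarrow> (\<exists>a b c d. S = {a, b, c, d} \<and> distinct [a, b, c, d])"
proof
  assume "card S = 4"
  then obtain a T where "S = insert a T" "a \<notin> T" "card T = 3"
    using card_eq_SucD[of S 3] by auto
  then show "\<exists>a b c d. S = {a, b, c, d} \<and> distinct [a, b, c, d]"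
    unfolding card_3_iff by auto
qed (auto simp: card_insert_if)

lemma orderings_insert4:
  assumes "distinct [a, b, c, d]"
  shows "orderings {a, b, c, d} =
    {(a,b,c,d), (a,b,d,c), (a,c,b,d), (a,c,d,b), (a,d,b,c), (a,d,c,b),
     (b,a,c,d), (b,a,d,c), (b,c,a,d), (b,c,d,a), (b,d,a,c), (b,d,c,a),
     (c,a,b,d), (c,a,d,b), (c,b,a,d), (c,b,d,a), (c,d,a,b), (c,d,b,a),
     (d,a,b,c), (d,a,c,b), (d,b,a,c), (d,b,c,a), (d,c,a,b), (d,c,b,a)}"
  (is "_ = ?T")
proof
  show "?T \<subseteq> orderings {a, b, c, d}"
    using assms unfolding orderings_def by auto
  show "orderings {a, b, c, d} \<subseteq> ?T"
  proof
    fix t assume "t \<in> orderings {a, b, c, d}"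
    then obtain x y z w where t: "t = (x, y, z, w)" "distinct [x, y, z, w]"
      and eq: "{x, y, z, w} = {a, b, c, d}"
      by (auto simp: orderings_def)
    have "x \<in> {a, b, c, d}" "y \<in> {a, b, c, d}" "z \<in> {a, b, c, d}" "w \<in> {a, b, c, d}"
      using eq by blast+
    then show "t \<in> ?T"
      using t assms by (elim insertE emptyE) auto
  qed
qed

lemma sum_orderings_insert4:
  assumes "distinct [a, b, c, d]"
  shows "(\<Sum>x\<in>orderings {a, b, c, d}. f x) =
      f (a,b,c,d) + f (a,b,d,c) + f (a,c,b,d) + f (a,c,d,b) + f (a,d,b,c) + f (a,d,c,b)
    + f (b,a,c,d) + f (b,a,d,c) + f (b,c,a,d) + f (b,c,d,a) + f (b,d,a,c) + f (b,d,c,a)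
    + f (c,a,b,d) + f (c,a,d,b) + f (c,b,a,d) + f (c,b,d,a) + f (c,d,a,b) + f (c,d,b,a)
    + f (d,a,b,c) + f (d,a,c,b) + f (d,b,a,c) + f (d,b,c,a) + f (d,c,a,b) + f (d,c,b,a)"
  using assms by (simp add: orderings_insert4 add.assoc)

lemma card_orderings:
  assumes "card S = 4"
  shows "card (orderings S) = 24"
proof -
  obtain a b c d where S: "S = {a, b, c, d}" and abcd: "distinct [a, b, c, d]"
    using assms by (auto simp: card_4_iff)
  have "real (card (orderings S)) = 24"
    using sum_orderings_insert4[OF abcd, of "\<lambda>_. 1::real"] by (simp add: S)
  then show ?thesis
    by linarith
qed

lemma sum_distinct_tuples:
  assumes "finite V"
  shows "(\<Sum>x\<in>distinct_tuples V. f x) = (\<Sum>S | S \<subseteq> V \<and> card S = 4. \<Sum>x\<in>orderings S. f x)"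
proof -
  let ?set = "\<lambda>(a, b, c, d). {a, b, c, d}"
  have "finite (distinct_tuples V)"
    by (rule finite_subset[of _ "V \<times> V \<times> V \<times> V"]) (auto simp: distinct_tuples_def assms)
  moreover have "?set ` distinct_tuples V \<subseteq> {S. S \<subseteq> V \<and> card S = 4}"
    by (auto simp: distinct_tuples_def)
  moreover have "{x \<in> distinct_tuples V. ?set x = S} = orderings S" if "S \<subseteq> V" for S
    using that by (auto simp: distinct_tuples_def orderings_def)
  ultimately show ?thesis
    using sum.group[of "distinct_tuples V" "{S. S \<subseteq> V \<and> card S = 4}" ?set f] assms
    by simp
qed

lemma card_distinct_tuples:
  "finite V \<Longrightarrow> card (distinct_tuples V) = 24 * (card V choose 4)"
  using sum_distinct_tuples[of V "\<lambda>_. 1::nat"] by (simp add: card_orderings n_subsets)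

lemma card_nondistinct_tuples:
  assumes "finite V"
  shows "real (card (V \<times> V \<times> V \<times> V - distinct_tuples V)) \<le> 6 * real (card V) ^ 3"
proof -
  define n where "n = real (card V)"
  have sub: "distinct_tuples V \<subseteq> V \<times> V \<times> V \<times> V"
    by (auto simp: distinct_tuples_def)
  have "real (card (V \<times> V \<times> V \<times> V - distinct_tuples V))
      = real (card (V \<times> V \<times> V \<times> V)) - real (card (distinct_tuples V))"
  proof -
    have "finite (V \<times> V \<times> V \<times> V)"
      using assms by simp
    then show ?thesis
      using sub card_mono[OF _ sub] by (simp add: card_Diff_subset finite_subset)
  qed
  also have "\<dots> = n ^ 4 - 24 * real (card V choose 4)"
    using assms by (simp add: card_distinct_tuples card_cartesian_product n_def power4_eq_xxxx)
  also have "24 * real (card V choose 4) = n * (n - 1) * (n - 2) * (n - 3)"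
    by (simp add: binomial_gbinomial gbinomial_altdef_of_nat n_def lessThan_nat_numeral atLeast0LessThan)
  also have "n ^ 4 - n * (n - 1) * (n - 2) * (n - 3) = 6 * n ^ 3 - n * (11 * n - 6)"
    by (simp add: algebra_simps power4_eq_xxxx power3_eq_cube)
  also have "\<dots> \<le> 6 * n ^ 3"
    unfolding n_def by (cases "card V") auto
  finally show ?thesis
    by (simp add: n_def)
qed

section \<open>Four-vertex patterns\<close>

lemma simple_graph_edges_graph: "(\<And>i. (i, i) \<notin> S) \<Longrightarrow> simple_graph (edges_graph S)"
  by (auto simp: simple_graph_def edges_graph_def)

lemma simple_graph_gcompl: "simple_graph H \<Longrightarrow> simple_graph (gcompl H)"
  by (auto simp: simple_graph_def gcompl_def)

lemma simple_graph_patterns: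
  "simple_graph K4" "simple_graph D4" "simple_graph P3" "simple_graph C4" "simple_graph P4" "simple_graph K13"
  unfolding K4_def D4_def P3_def C4_def P4_def K13_def by (auto intro: simple_graph_edges_graph)

lemma induced_copy_insert4:
  assumes E: "simple_graph E" and H: "simple_graph H" and abcd: "distinct [a, b, c, d]"
  shows "induced_copy H 4 E {a, b, c, d} \<longleftrightarrow>
    (\<exists>(i, j, k, l) \<in> orderings {0, 1, 2, 3}.
       E a b = H i j \<and> E a c = H i k \<and> E a d = H i l \<and> E b c = H j k \<and> E b d = H j l \<and> E c d = H k l)"
proof -
  have four: "{0..<4} = {0, 1, 2, 3::nat}"
    by auto
  show ?thesis
  proof
    assume "induced_copy H 4 E {a, b, c, d}"
    then obtain f where f: "bij_betw f {a, b, c, d} {0..<4}"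
      and edges: "\<forall>x\<in>{a, b, c, d}. \<forall>y\<in>{a, b, c, d}. E x y \<longleftrightarrow> H (f x) (f y)"
      unfolding induced_copy_def by blast
    have "{f a, f b, f c, f d} = {0, 1, 2, 3}"
      using bij_betw_imp_surj_on[OF f] by (simp add: four)
    moreover have "distinct (map f [a, b, c, d])"
      unfolding distinct_map using bij_betw_imp_inj_on[OF f] abcd by simp
    ultimately have "(f a, f b, f c, f d) \<in> orderings {0, 1, 2, 3}"
      by (simp add: orderings_def)
    moreover have "E x y = H (f x) (f y)" if "x \<in> {a, b, c, d}" "y \<in> {a, b, c, d}" for x y
      using edges that by blast
    ultimately show "\<exists>(i, j, k, l) \<in> orderings {0, 1, 2, 3}.
         E a b = H i j \<and> E a c = H i k \<and> E a d = H i l \<and> E b c = H j k \<and> E b d = H j l \<and> E c d = H k l"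
      by (intro bexI[of _ "(f a, f b, f c, f d)"]) simp_all
  next
    assume "\<exists>(i, j, k, l) \<in> orderings {0, 1, 2, 3}.
         E a b = H i j \<and> E a c = H i k \<and> E a d = H i l \<and> E b c = H j k \<and> E b d = H j l \<and> E c d = H k l"
    then obtain i j k l where "(i, j, k, l) \<in> orderings {0, 1, 2, 3}"
      and edges: "E a b = H i j" "E a c = H i k" "E a d = H i l" "E b c = H j k" "E b d = H j l" "E c d = H k l"
      by blast
    then have ijkl: "distinct [i, j, k, l]" "{i, j, k, l} = {0, 1, 2, 3}"
      by (simp_all add: orderings_def)
    define f where "f x = (if x = a then i else if x = b then j else if x = c then k else l)" for x
    have f: "f a = i" "f b = j" "f c = k" "f d = l"
      using abcd by (auto simp: f_def)
    have "inj_on f {a, b, c, d}"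
      using ijkl(1) f by (auto simp: inj_on_def)
    moreover have "f ` {a, b, c, d} = {0..<4}"
      using ijkl(2) f by (simp add: four)
    ultimately have "bij_betw f {a, b, c, d} {0..<4}"
      by (simp add: bij_betw_def)
    moreover have "\<forall>x\<in>{a, b, c, d}. \<forall>y\<in>{a, b, c, d}. E x y \<longleftrightarrow> H (f x) (f y)"
      using E H edges f by (simp add: simple_graph_def)
    ultimately show "induced_copy H 4 E {a, b, c, d}"
      unfolding induced_copy_def by blast
  qed
qed

definition pattern_weight :: "(nat \<Rightarrow> nat \<Rightarrow> bool) \<Rightarrow> nat set \<Rightarrow> real" where
  "pattern_weight E S =
      1 * of_bool (induced_copy K4 4 E S) + 1/2 * of_bool (induced_copy (gcompl K4) 4 E S)
    + 5/12 * of_bool (induced_copy D4 4 E S) + 5/12 * of_bool (induced_copy (gcompl D4) 4 E S)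
    + 1/3 * of_bool (induced_copy P3 4 E S) + 1/6 * of_bool (induced_copy (gcompl P3) 4 E S)
    + 1/2 * of_bool (induced_copy C4 4 E S) + 1/3 * of_bool (induced_copy (gcompl C4) 4 E S)
    + 1/4 * of_bool (induced_copy K13 4 E S) + 1/4 * of_bool (induced_copy (gcompl K13) 4 E S)
    + 1/4 * of_bool (induced_copy P4 4 E S)"

lemma sum_of_bool_induced_copy:
  "(\<Sum>S | S \<subseteq> {0..<n} \<and> card S = 4. of_bool (induced_copy H 4 E S))
    = real (n choose 4) * p4 H n E"
proof -
  let ?C = "{S. S \<subseteq> {0..<n} \<and> card S = 4 \<and> induced_copy H 4 E S}"
  have "{S. S \<subseteq> {0..<n} \<and> card S = 4} \<inter> {S. induced_copy H 4 E S} = ?C"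
    by blast
  \<comment> \<open>For n < 4, p4 divides by 0; both sides vanish since there are no 4-sets.\<close>
  moreover have "real (card ?C) = real (n choose 4) * p4 H n E"
  proof (cases "n choose 4 = 0")
    case True
    have "card ?C \<le> card {S. S \<subseteq> {0..<n} \<and> card S = 4}"
      by (intro card_mono) auto
    also have "\<dots> = n choose 4"
      by (simp add: n_subsets)
    finally have "card ?C = 0"
      using True by linarith
    then show ?thesis
      by (simp only: True of_nat_0 mult_zero_left)
  qed (simp add: p4_def)
  ultimately show ?thesis
    by simp
qed

lemma sum_pattern_weight:
  "(\<Sum>S | S \<subseteq> {0..<n} \<and> card S = 4. pattern_weight E S) = real (n choose 4) * weighted_sum n E"
  unfolding pattern_weight_def weighted_sum_def
  by (simp only: sum.distrib sum_distrib_left[symmetric] sum_of_bool_induced_copy)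
    (simp add: algebra_simps)

section \<open>The flag polynomial\<close>

definition signed_adj :: "('a \<Rightarrow> 'a \<Rightarrow> bool) \<Rightarrow> 'a \<Rightarrow> 'a \<Rightarrow> real" where
  "signed_adj E u v = (if u = v then 0 else if E u v then 1 else -1)"

lemma abs_signed_adj_le: "\<bar>signed_adj E u v\<bar> \<le> 1"
  by (simp add: signed_adj_def)

lemma signed_adj_commute: "simple_graph E \<Longrightarrow> signed_adj E u v = signed_adj E v u"
  by (auto simp: signed_adj_def simple_graph_def)

text \<open>
  The coefficients are chosen so that the local inequality flag_poly_orderings_le_pattern_weight
  holds, while after summation over all 4-tuples the terms spanning two or three edges are
  nonnegative, leaving only the 4-cycle term.
\<close>
definition flag_poly :: "('a \<Rightarrow> 'a \<Rightarrow> real) \<Rightarrow> 'a \<times> 'a \<times> 'a \<times> 'a \<Rightarrow> real" where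
  "flag_poly A = (\<lambda>(a, b, c, d). A a b * A b c / 96 + A a b * A c d / 192
     + A a b * A b c * A c d / 96 + A a b * A b c * A c d * A d a / 384)"

lemma abs_flag_poly_le:
  assumes "\<And>u v. \<bar>A u v\<bar> \<le> 1"
  shows "\<bar>flag_poly A x\<bar> \<le> 1/24"
proof -
  obtain a b c d where x: "x = (a, b, c, d)"
    by (cases x) auto
  have "\<bar>A a b * A b c\<bar> \<le> 1" "\<bar>A a b * A c d\<bar> \<le> 1" "\<bar>A a b * A b c * A c d\<bar> \<le> 1"
    "\<bar>A a b * A b c * A c d * A d a\<bar> \<le> 1"
    using assms by (simp_all add: abs_mult mult_le_one)
  then show ?thesis
    unfolding x flag_poly_def prod.case abs_le_iff by linarith
qed

lemma flag_poly_orderings_le_pattern_weight: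
  assumes E: "simple_graph E" and abcd: "distinct [a, b, c, d]"
  shows "(\<Sum>x\<in>orderings {a, b, c, d}. flag_poly (signed_adj E) x) \<le> pattern_weight E {a, b, c, d} - 5/16"
proof -
  have ne: "a \<noteq> b" "a \<noteq> c" "a \<noteq> d" "b \<noteq> c" "b \<noteq> d" "c \<noteq> d"
    using abcd by auto
  have signed: "signed_adj E x y = (if E x y then 1 else -1)" "signed_adj E y x = (if E x y then 1 else -1)"
    if "x \<noteq> y" for x y
    using E that by (auto simp: signed_adj_def simple_graph_def)
  have ord: "orderings {0, 1, 2, 3::nat} =
    {(0,1,2,3), (0,1,3,2), (0,2,1,3), (0,2,3,1), (0,3,1,2), (0,3,2,1),
     (1,0,2,3), (1,0,3,2), (1,2,0,3), (1,2,3,0), (1,3,0,2), (1,3,2,0),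
     (2,0,1,3), (2,0,3,1), (2,1,0,3), (2,1,3,0), (2,3,0,1), (2,3,1,0),
     (3,0,1,2), (3,0,2,1), (3,1,0,2), (3,1,2,0), (3,2,0,1), (3,2,1,0)}"
    by (rule orderings_insert4) simp
  show ?thesis
    unfolding sum_orderings_insert4[OF abcd] pattern_weight_def
    apply (simp only: induced_copy_insert4[OF E _ abcd] simple_graph_patterns simple_graph_gcompl ord)
    apply (simp only: bex_simps prod.case K4_def D4_def P3_def C4_def P4_def K13_def
        gcompl_def edges_graph_def insert_iff empty_iff prod.inject simp_thms semiring_norm
        flag_poly_def signed[OF ne(1)] signed[OF ne(2)] signed[OF ne(3)]
        signed[OF ne(4)] signed[OF ne(5)] signed[OF ne(6)])
    apply (cases "E a b"; cases "E a c"; cases "E a d"; cases "E b c"; cases "E b d"; cases "E c d";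
        simp)
    done
qed

lemma sum_distinct_tuples_flag_poly_nonpos:
  assumes E: "simple_graph E" and Pi: "in_Pi n E"
  shows "(\<Sum>x\<in>distinct_tuples {0..<n}. flag_poly (signed_adj E) x) \<le> 0"
proof -
  have "(\<Sum>x\<in>distinct_tuples {0..<n}. flag_poly (signed_adj E) x)
      = (\<Sum>S | S \<subseteq> {0..<n} \<and> card S = 4. \<Sum>x\<in>orderings S. flag_poly (signed_adj E) x)"
    by (rule sum_distinct_tuples) simp
  also have "\<dots> \<le> (\<Sum>S | S \<subseteq> {0..<n} \<and> card S = 4. pattern_weight E S - 5/16)"
  proof (rule sum_mono)
    fix S assume "S \<in> {S. S \<subseteq> {0..<n} \<and> card S = 4}"
    then obtain a b c d where "S = {a, b, c, d}" "distinct [a, b, c, d]"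
      by (auto simp: card_4_iff)
    then show "(\<Sum>x\<in>orderings S. flag_poly (signed_adj E) x) \<le> pattern_weight E S - 5/16"
      using flag_poly_orderings_le_pattern_weight[OF E] by simp
  qed
  also have "\<dots> = real (n choose 4) * (weighted_sum n E - 5/16)"
    by (simp add: sum_subtractf sum_pattern_weight n_subsets algebra_simps)
  also have "\<dots> \<le> 0"
    using Pi by (simp add: in_Pi_def mult_nonneg_nonpos)
  finally show ?thesis .
qed

lemma sum_flag_poly_le:
  assumes "simple_graph E" and "in_Pi n E"
  shows "(\<Sum>x\<in>{0..<n} \<times> {0..<n} \<times> {0..<n} \<times> {0..<n}. flag_poly (signed_adj E) x) \<le> real n ^ 3 / 4"
proof -
  let ?V = "{0..<n}"
  let ?f = "flag_poly (signed_adj E)"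
  have sub: "distinct_tuples ?V \<subseteq> ?V \<times> ?V \<times> ?V \<times> ?V"
    by (auto simp: distinct_tuples_def)
  have f_le: "?f x \<le> 1/24" for x
    by (rule abs_le_D1[OF abs_flag_poly_le]) (rule abs_signed_adj_le)
  have "sum ?f (?V \<times> ?V \<times> ?V \<times> ?V)
      = sum ?f (?V \<times> ?V \<times> ?V \<times> ?V - distinct_tuples ?V) + sum ?f (distinct_tuples ?V)"
    by (rule sum.subset_diff[OF sub]) simp
  also have "sum ?f (?V \<times> ?V \<times> ?V \<times> ?V - distinct_tuples ?V)
      \<le> real (card (?V \<times> ?V \<times> ?V \<times> ?V - distinct_tuples ?V)) * (1/24)"
    by (intro sum_bounded_above f_le)
  also have "\<dots> \<le> 6 * real n ^ 3 * (1/24)"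
    using card_nondistinct_tuples[of ?V] by simp
  finally show ?thesis
    using sum_distinct_tuples_flag_poly_nonpos[OF assms] by simp
qed

section \<open>Signed four-cycles\<close>

definition cycle4_sum :: "('a \<Rightarrow> 'a \<Rightarrow> real) \<Rightarrow> 'a set \<Rightarrow> real" where
  "cycle4_sum A V = (\<Sum>a\<in>V. \<Sum>b\<in>V. \<Sum>c\<in>V. \<Sum>d\<in>V. A a b * A b c * A c d * A d a)"

lemma cycle4_sum_le_sum_flag_poly:
  assumes sym: "\<And>u v. A u v = A v u" and bound: "\<And>u v. \<bar>A u v\<bar> \<le> 1"
  shows "cycle4_sum A V / 384 \<le> (\<Sum>x\<in>V \<times> V \<times> V \<times> V. flag_poly A x)"
proof -
  define deg where "deg u = (\<Sum>v\<in>V. A u v)" for u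
  define paths2 where "paths2 = (\<Sum>a\<in>V. \<Sum>b\<in>V. \<Sum>c\<in>V. \<Sum>d\<in>V. A a b * A b c)"
  define matchings where "matchings = (\<Sum>a\<in>V. \<Sum>b\<in>V. \<Sum>c\<in>V. \<Sum>d\<in>V. A a b * A c d)"
  define paths3 where "paths3 = (\<Sum>a\<in>V. \<Sum>b\<in>V. \<Sum>c\<in>V. \<Sum>d\<in>V. A a b * A b c * A c d)"
  have flag_sum: "(\<Sum>x\<in>V \<times> V \<times> V \<times> V. flag_poly A x)
      = paths2 / 96 + matchings / 192 + paths3 / 96 + cycle4_sum A V / 384"
    unfolding sum_tuples_nested paths2_def matchings_def paths3_def cycle4_sum_def flag_poly_def
    by (simp add: sum.distrib sum_divide_distrib)
  define total where "total = (\<Sum>c\<in>V. \<Sum>d\<in>V. A c d)"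
  have "matchings = (\<Sum>a\<in>V. \<Sum>b\<in>V. A a b * total)"
    unfolding matchings_def total_def by (simp add: sum_distrib_left)
  also have "\<dots> = total * total"
    unfolding total_def by (simp add: sum_distrib_right)
  finally have "0 \<le> matchings"
    by simp
  have paths2_eq: "paths2 = real (card V) * (\<Sum>b\<in>V. deg b ^ 2)"
  proof -
    have "paths2 = real (card V) * (\<Sum>b\<in>V. \<Sum>a\<in>V. \<Sum>c\<in>V. A b a * A b c)"
      unfolding paths2_def by (subst sum.swap) (simp add: sum_distrib_left sym)
    then show ?thesis
      by (simp add: deg_def power2_eq_square sum_product)
  qed
  have "(\<Sum>b\<in>V. \<Sum>c\<in>V. deg b ^ 2 + deg c ^ 2)
      = (\<Sum>b\<in>V. \<Sum>c\<in>V. deg b ^ 2) + (\<Sum>b\<in>V. \<Sum>c\<in>V. deg c ^ 2)"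
    by (simp add: sum.distrib)
  also have "\<dots> = 2 * paths2"
    unfolding paths2_eq by (simp add: sum_distrib_left)
  finally have paths2_sq: "(\<Sum>b\<in>V. \<Sum>c\<in>V. deg b ^ 2 + deg c ^ 2) = 2 * paths2" .
  have paths3_eq: "paths3 = (\<Sum>b\<in>V. \<Sum>c\<in>V. deg b * A b c * deg c)"
  proof -
    have "paths3 = (\<Sum>b\<in>V. \<Sum>a\<in>V. \<Sum>c\<in>V. \<Sum>d\<in>V. A b a * A b c * A c d)"
      unfolding paths3_def by (subst sum.swap) (simp add: sym)
    also have "\<dots> = (\<Sum>b\<in>V. \<Sum>c\<in>V. \<Sum>a\<in>V. \<Sum>d\<in>V. A b a * A b c * A c d)"
      by (rule sum.cong[OF refl], rule sum.swap)
    also have "\<dots> = (\<Sum>b\<in>V. \<Sum>c\<in>V. deg b * A b c * deg c)"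
    proof (intro sum.cong refl)
      fix b c
      have "(\<Sum>a\<in>V. \<Sum>d\<in>V. A b a * A b c * A c d) = (\<Sum>a\<in>V. A b a * A b c * deg c)"
        by (simp add: deg_def sum_distrib_left)
      also have "\<dots> = deg b * A b c * deg c"
        by (simp add: deg_def[of b] sum_distrib_right)
      finally show "(\<Sum>a\<in>V. \<Sum>d\<in>V. A b a * A b c * A c d) = deg b * A b c * deg c" .
    qed
    finally show ?thesis .
  qed
  \<comment> \<open>AM-GM bounds the three-edge path term deg b * A b c * deg c by the two-edge ones.\<close>
  have edge_nonneg: "0 \<le> deg b ^ 2 + deg c ^ 2 + 2 * (deg b * A b c * deg c)" for b c
  proof -
    have "\<bar>deg b * A b c * deg c\<bar> = \<bar>deg b\<bar> * \<bar>A b c\<bar> * \<bar>deg c\<bar>"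
      by (simp only: abs_mult)
    also have "\<dots> \<le> \<bar>deg b\<bar> * 1 * \<bar>deg c\<bar>"
      by (intro mult_right_mono mult_left_mono bound) simp_all
    finally have "\<bar>deg b * A b c * deg c\<bar> \<le> \<bar>deg b\<bar> * \<bar>deg c\<bar>"
      by simp
    moreover have "2 * (\<bar>deg b\<bar> * \<bar>deg c\<bar>) \<le> deg b ^ 2 + deg c ^ 2"
      using sum_squares_bound[of "\<bar>deg b\<bar>" "\<bar>deg c\<bar>"] by simp
    ultimately show ?thesis
      unfolding abs_le_iff by linarith
  qed
  have "0 \<le> (\<Sum>b\<in>V. \<Sum>c\<in>V. deg b ^ 2 + deg c ^ 2 + 2 * (deg b * A b c * deg c))"
    by (intro sum_nonneg edge_nonneg)
  also have "\<dots> = 2 * paths2 + 2 * paths3"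
    unfolding paths2_sq[symmetric] paths3_eq by (simp only: sum.distrib sum_distrib_left)
  finally have "0 \<le> 2 * paths2 + 2 * paths3" .
  with \<open>0 \<le> matchings\<close> show ?thesis
    unfolding flag_sum by linarith
qed


lemma cycle4_sum_signed_adj_le:
  assumes "simple_graph E" and "in_Pi n E"
  shows "cycle4_sum (signed_adj E) {0..<n} \<le> 96 * real n ^ 3"
  using cycle4_sum_le_sum_flag_poly[of "signed_adj E" "{0..<n}", OF signed_adj_commute[OF assms(1)] abs_signed_adj_le]
    sum_flag_poly_le[OF assms]
  by linarith

section \<open>Discrepancy\<close>

lemma cycle4_sum_eq_sum_codegree_sq:
  assumes sym: "\<And>u v. A u v = A v u"
  shows "cycle4_sum A V = (\<Sum>p\<in>V \<times> V. (\<Sum>u\<in>V. A u (fst p) * A u (snd p)) ^ 2)"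
proof -
  have cycle: "A u w * A u w' * (A v w * A v w') = A u w * A w v * A v w' * A w' u" for u w v w'
    by (simp add: sym[of u w'] sym[of v w] mult_ac)
  have "(\<Sum>p\<in>V \<times> V. (\<Sum>u\<in>V. A u (fst p) * A u (snd p)) ^ 2)
      = (\<Sum>w\<in>V. \<Sum>w'\<in>V. (\<Sum>u\<in>V. A u w * A u w') ^ 2)"
    by (simp add: sum.cartesian_product split_def)
  also have "\<dots> = (\<Sum>w\<in>V. \<Sum>w'\<in>V. \<Sum>u\<in>V. \<Sum>v\<in>V. A u w * A u w' * (A v w * A v w'))"
    by (simp add: power2_eq_square sum_product)
  also have "\<dots> = (\<Sum>w\<in>V. \<Sum>w'\<in>V. \<Sum>u\<in>V. \<Sum>v\<in>V. A u w * A w v * A v w' * A w' u)"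
    by (simp only: cycle)
  also have "\<dots> = (\<Sum>u\<in>V. \<Sum>w\<in>V. \<Sum>v\<in>V. \<Sum>w'\<in>V. A u w * A w v * A v w' * A w' u)"
    unfolding sum_tuples_nested[symmetric, where f = "\<lambda>(w, w', u, v). A u w * A w v * A v w' * A w' u", simplified]
      sum_tuples_nested[symmetric, where f = "\<lambda>(u, w, v, w'). A u w * A w v * A v w' * A w' u", simplified]
    by (rule sum.reindex_bij_witness[where i = "\<lambda>(u, w, v, w'). (w, w', u, v)" and j = "\<lambda>(w, w', u, v). (u, w, v, w')"]) auto
  finally show ?thesis
    unfolding cycle4_sum_def ..
qed

lemma discrepancy_pow4_le:
  assumes sym: "\<And>u v. A u v = A v u" and "finite V" "U \<subseteq> V" "W \<subseteq> V"
  shows "(\<Sum>u\<in>U. \<Sum>w\<in>W. A u w) ^ 4 \<le> real (card U) ^ 2 * real (card W) ^ 2 * cycle4_sum A V"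
proof -
  define X where "X = (\<Sum>u\<in>U. \<Sum>w\<in>W. A u w)"
  define codeg where "codeg p = (\<Sum>u\<in>V. A u (fst p) * A u (snd p))" for p
  define R where "R = (\<Sum>p\<in>W \<times> W. codeg p)"
  have "X ^ 2 \<le> (\<Sum>u\<in>U. (\<Sum>w\<in>W. A u w) ^ 2) * real (card U)"
    unfolding X_def by (rule sum_squared_le_sum_of_squares)
  also have "\<dots> \<le> (\<Sum>u\<in>V. (\<Sum>w\<in>W. A u w) ^ 2) * real (card U)"
    using assms by (intro mult_right_mono sum_mono2) auto
  also have "\<dots> = R * real (card U)"
  proof -
    have "(\<Sum>u\<in>V. (\<Sum>w\<in>W. A u w) ^ 2) = (\<Sum>u\<in>V. \<Sum>p\<in>W \<times> W. A u (fst p) * A u (snd p))"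
      by (simp add: power2_eq_square sum_product sum.cartesian_product split_def)
    also have "\<dots> = R"
      unfolding R_def codeg_def by (rule sum.swap)
    finally show ?thesis
      by simp
  qed
  finally have X2: "X ^ 2 \<le> R * real (card U)" .
  have "R ^ 2 \<le> (\<Sum>p\<in>W \<times> W. codeg p ^ 2) * real (card (W \<times> W))"
    unfolding R_def by (rule sum_squared_le_sum_of_squares)
  also have "\<dots> \<le> (\<Sum>p\<in>V \<times> V. codeg p ^ 2) * real (card (W \<times> W))"
    using assms by (intro mult_right_mono sum_mono2) auto
  also have "\<dots> = cycle4_sum A V * real (card W) ^ 2"
    unfolding cycle4_sum_eq_sum_codegree_sq[OF sym] codeg_def
    by (simp add: card_cartesian_product power2_eq_square)
  finally have R2: "R ^ 2 \<le> cycle4_sum A V * real (card W) ^ 2" .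
  have "X ^ 4 = (X ^ 2) ^ 2"
    by simp
  also have "\<dots> \<le> (R * real (card U)) ^ 2"
    by (rule power_mono[OF X2]) simp
  also have "\<dots> = R ^ 2 * real (card U) ^ 2"
    by (simp add: power_mult_distrib)
  also have "\<dots> \<le> cycle4_sum A V * real (card W) ^ 2 * real (card U) ^ 2"
    by (rule mult_right_mono[OF R2]) simp
  finally show ?thesis
    unfolding X_def by (simp add: mult_ac)
qed

lemma sum_signed_adj_eq_e_between:
  assumes "U \<inter> W = {}" "finite U" "finite W"
  shows "(\<Sum>u\<in>U. \<Sum>w\<in>W. signed_adj E u w) = 2 * real (e_between E U W) - real (card U) * real (card W)"
proof -
  have "(\<Sum>u\<in>U. \<Sum>w\<in>W. signed_adj E u w) = (\<Sum>p\<in>U \<times> W. 2 * of_bool (E (fst p) (snd p)) - 1)"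
    unfolding sum.cartesian_product
    by (rule sum.cong) (use assms(1) in \<open>auto simp: signed_adj_def\<close>)
  also have "\<dots> = 2 * (\<Sum>p\<in>U \<times> W. of_bool (E (fst p) (snd p))) - real (card (U \<times> W))"
    by (simp add: sum_subtractf sum_distrib_left)
  also have "(\<Sum>p\<in>U \<times> W. of_bool (E (fst p) (snd p))) = real (card ((U \<times> W) \<inter> {p. E (fst p) (snd p)}))"
    using assms by simp
  also have "(U \<times> W) \<inter> {p. E (fst p) (snd p)} = {(u, w). u \<in> U \<and> w \<in> W \<and> E u w}"
    by auto
  finally show ?thesis
    by (simp add: e_between_def card_cartesian_product)
qed

lemma quasirandom_if_cycle4_sum_le:
  assumes E: "simple_graph E" and "0 \<le> \<delta>"
    and cycles: "cycle4_sum (signed_adj E) {0..<n} \<le> 16 * \<delta> ^ 8 * real n ^ 4"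
  shows "quasirandom \<delta> n E"
  unfolding quasirandom_def
proof (intro allI impI)
  fix U W
  assume "U \<subseteq> {0..<n} \<and> W \<subseteq> {0..<n} \<and> U \<inter> W = {} \<and> \<delta> * real n \<le> real (card U) \<and> \<delta> * real n \<le> real (card W)"
  then have U: "U \<subseteq> {0..<n}" and W: "W \<subseteq> {0..<n}" and UW: "U \<inter> W = {}"
    and large: "\<delta> * real n \<le> real (card U)" "\<delta> * real n \<le> real (card W)"
    by auto
  define u where "u = real (card U)"
  define w where "w = real (card W)"
  define X where "X = (\<Sum>u\<in>U. \<Sum>w\<in>W. signed_adj E u w)"
  define P where "P = u ^ 2 * w ^ 2"
  have "\<delta> ^ 4 * real n ^ 4 = (\<delta> * real n) ^ 2 * (\<delta> * real n) ^ 2"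
    by (simp add: power_mult_distrib power2_eq_square power4_eq_xxxx)
  also have "\<dots> \<le> P"
    using large \<open>0 \<le> \<delta>\<close> unfolding P_def u_def w_def by (intro mult_mono power_mono) auto
  finally have P_large: "\<delta> ^ 4 * real n ^ 4 \<le> P" .
  have "X ^ 4 \<le> P * cycle4_sum (signed_adj E) {0..<n}"
    unfolding X_def P_def u_def w_def
    by (rule discrepancy_pow4_le[OF signed_adj_commute[OF E] _ U W]) simp
  also have "\<dots> \<le> P * (16 * \<delta> ^ 8 * real n ^ 4)"
    by (rule mult_left_mono[OF cycles]) (simp add: P_def)
  also have "\<dots> = 16 * \<delta> ^ 4 * P * (\<delta> ^ 4 * real n ^ 4)"
  proof -
    have "\<delta> ^ 8 = \<delta> ^ 4 * \<delta> ^ 4"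
      by (simp flip: power_add)
    then show ?thesis
      by (simp add: mult_ac)
  qed
  also have "\<dots> \<le> 16 * \<delta> ^ 4 * P * P"
    using P_large \<open>0 \<le> \<delta>\<close> by (intro mult_left_mono) (simp_all add: P_def)
  also have "\<dots> = (2 * \<delta> * u * w) ^ 4"
    unfolding P_def by (simp add: power_mult_distrib power2_eq_square power4_eq_xxxx)
  finally have "\<bar>X\<bar> ^ Suc 3 \<le> (2 * \<delta> * u * w) ^ Suc 3"
    by (simp add: power_abs)
  then have "\<bar>X\<bar> \<le> 2 * \<delta> * u * w"
    by (rule power_le_imp_le_base) (simp add: \<open>0 \<le> \<delta>\<close> u_def w_def)
  then have "- (2 * \<delta> * u * w) \<le> X" "X \<le> 2 * \<delta> * u * w"
    by (simp_all add: abs_le_iff)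
  moreover have "X = 2 * real (e_between E U W) - u * w"
    unfolding X_def u_def w_def
    by (rule sum_signed_adj_eq_e_between[OF UW]) (use U W finite_subset in auto)
  ultimately have "(1/2 - \<delta>) * u * w \<le> real (e_between E U W)"
    "real (e_between E U W) \<le> (1/2 + \<delta>) * u * w"
    by (simp_all add: algebra_simps)
  then show "(1/2 - \<delta>) * real (card U) * real (card W) \<le> real (e_between E U W) \<and>
      real (e_between E U W) \<le> (1/2 + \<delta>) * real (card U) * real (card W)"
    by (simp add: u_def w_def)
qed

theorem lemma2p4:
  shows "\<exists>C::real. \<forall>n::nat. \<forall>E. n \<ge> 1 \<and> simple_graph E \<and> in_Pi n E \<longrightarrow>
            quasirandom (C * real n powr (-1/24)) n E"
proof (rule exI[of _ 2], intro allI impI)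
  fix n :: nat and E
  assume "n \<ge> 1 \<and> simple_graph E \<and> in_Pi n E"
  then have n: "1 \<le> n" and E: "simple_graph E" and Pi: "in_Pi n E"
    by auto
  have "96 * real n ^ 3 \<le> 4096 * real n ^ 3 * 1"
    by simp
  also have "\<dots> \<le> 4096 * real n ^ 3 * real n powr (2/3)"
    using n by (intro mult_left_mono ge_one_powr_ge_zero) auto
  also have "\<dots> = 16 * (2 * real n powr (-1/24)) ^ 8 * real n ^ 4"
  proof -
    have "real n * real n powr (-1/3) = real n powr (2/3)"
      using n by (simp add: powr_mult_base)
    then show ?thesis
      using n by (simp add: power_mult_distrib powr_power power3_eq_cube power4_eq_xxxx mult_ac)
  qed
  finally have cycles: "96 * real n ^ 3 \<le> 16 * (2 * real n powr (-1/24)) ^ 8 * real n ^ 4" .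
  show "quasirandom (2 * real n powr (-1/24)) n E"
    by (rule quasirandom_if_cycle4_sum_le[OF E _ order_trans[OF cycle4_sum_signed_adj_le[OF E Pi] cycles]])
      simp
qed

end
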